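(* Fix $0\le\zeta_1<\zeta_2\le1$. For $\zeta_1<\zeta<\zeta_2$ define $$q(\zeta)=\frac{D(\zeta_2\|\zeta)\,(\zeta-\zeta_1)^2}{D(\zeta_1\|\zeta)\,(\zeta_2-\zeta)^2}.$$ Then $q$ is non-decreasing on $(\zeta_1,\zeta_2)$.
   Context: $D(p\|q)=p\log\frac pq+(1-p)\log\frac{1-p}{1-q}$ is the binary Kullback–Leibler divergence (natural log, with $0\log0=0$), defined for $p\in[0,1]$, $q\in(0,1)$. *)

theory Defs
  imports Complex_Main
begin

definition xlogxy :: "real \<Rightarrow> real \<Rightarrow> real" where
  "xlogxy x y = (if x = 0 then 0 else x * ln (x / y))"

definition binKL :: "real \<Rightarrow> real \<Rightarrow> real" where
  "binKL p q = xlogxy p q + xlogxy (1 - p) (1 - q)"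

definition qfun :: "real \<Rightarrow> real \<Rightarrow> real \<Rightarrow> real" where
  "qfun z1 z2 z = (binKL z2 z * (z - z1)^2) / (binKL z1 z * (z2 - z)^2)"

end

theory Submission
  imports Defs "HOL-Real_Asymp.Real_Asymp"
begin

text \<open>
  The heart of the matter is a refinement of Pinsker's inequality,
  \<open>D(p\<parallel>q) \<ge> 3(p-q)\<^sup>2 / (6q(1-q) + 2(1-2q)(p-q))\<close>: the difference of both sides
  vanishes together with its derivative at \<open>p = q\<close> and is convex, the convexity being
  AM-GM for the three summands \<open>q(1-q)\<close>, \<open>p(1-q)\<close>, \<open>q(1-p)\<close> of the denominator.
  Since \<open>\<partial>D(p\<parallel>z)/\<partial>z = (z-p)/(z(1-z))\<close>, the logarithmic derivative of \<open>q\<close> is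
  \<open>2/(z-\<zeta>\<^sub>1) + 2/(\<zeta>\<^sub>2-z) - (\<zeta>\<^sub>2-z)/(z(1-z)D(\<zeta>\<^sub>2\<parallel>z)) - (z-\<zeta>\<^sub>1)/(z(1-z)D(\<zeta>\<^sub>1\<parallel>z))\<close>,
  and the refined Pinsker bound at \<open>p = \<zeta>\<^sub>2\<close> and \<open>p = \<zeta>\<^sub>1\<close> bounds the two negative terms
  by the two positive ones up to the correction terms \<open>\<plusminus>2(1-2z)/(3z(1-z))\<close>, which cancel.
\<close>

lemma deriv_nonneg_imp_mono_on:
  fixes f f' :: "real \<Rightarrow> real"
  assumes "\<And>x. x \<in> {a<..<b} \<Longrightarrow> (f has_real_derivative f' x) (at x)"
    and "\<And>x. x \<in> {a<..<b} \<Longrightarrow> f' x \<ge> 0"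
  shows "mono_on {a<..<b} f"
proof (rule mono_onI)
  fix r t assume "r \<in> {a<..<b}" "t \<in> {a<..<b}" "r \<le> t"
  then show "f r \<le> f t"
    using deriv_nonneg_imp_mono[of r t f f'] assms by auto
qed

lemma deriv_mono_imp_min:
  fixes f f' :: "real \<Rightarrow> real"
  assumes cont: "continuous_on {a..b} f"
    and deriv: "\<And>x. x \<in> {a<..<b} \<Longrightarrow> (f has_real_derivative f' x) (at x)"
    and mono: "mono_on {a<..<b} f'"
    and c: "c \<in> {a<..<b}" "f' c = 0"
    and x: "x \<in> {a..b}"
  shows "f c \<le> f x"
proof (cases "c \<le> x")
  case True
  show ?thesis
  proof (rule DERIV_nonneg_imp_increasing_open[OF True])
    fix y assume "c < y" "y < x"
    with c x have "y \<in> {a<..<b}" "f' c \<le> f' y"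
      using mono_onD[OF mono, of c y] by auto
    then show "\<exists>d. (f has_real_derivative d) (at y) \<and> d \<ge> 0"
      using deriv c by auto
  qed (use cont c x in \<open>auto intro: continuous_on_subset\<close>)
next
  case False
  show ?thesis
  proof (rule DERIV_nonpos_imp_decreasing_open[of x c])
    fix y assume "x < y" "y < c"
    with c x have "y \<in> {a<..<b}" "f' y \<le> f' c"
      using mono_onD[OF mono, of y c] by auto
    then show "\<exists>d. (f has_real_derivative d) (at y) \<and> d \<le> 0"
      using deriv c by auto
  qed (use False cont c x in \<open>auto intro: continuous_on_subset\<close>)
qed

lemma arith_geo_mean_three:
  fixes x y w :: real
  assumes "x \<ge> 0" "y \<ge> 0" "w \<ge> 0"
  shows "27*x*y*w \<le> (x+y+w)^3"
proof -
  have "2*((x+y+w)^3 - 27*x*y*w)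
        = (x+y+w)*((x-y)^2+(y-w)^2+(w-x)^2) + 6*(y*(x-w)^2 + x*(y-w)^2 + w*(x-y)^2)"
    by (simp add: power2_eq_square power3_eq_cube algebra_simps)
  also have "\<dots> \<ge> 0" using assms by simp
  finally show ?thesis by (simp add: algebra_simps)
qed

lemma quadratic_ratio_has_real_derivative:
  fixes s b c x :: real
  assumes L: "3*s + b*(x-c) \<noteq> 0"
  shows "((\<lambda>x. 3*(x-c)^2 / (2*(3*s + b*(x-c)))) has_real_derivative
           3*(x-c)*(6*s + b*(x-c)) / (2*(3*s + b*(x-c))^2)) (at x)"
proof -
  have alg: "(6*u * (2*L) - 3*u^2 * (2*b)) / (2*L * (2*L)) = 3*u*(6*s + b*u) / (2*L^2)"
    if "L = 3*s + b*u" "L \<noteq> 0" for u L :: real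
    using that by (simp add: divide_simps) (simp add: algebra_simps power2_eq_square)
  have "((\<lambda>x. 3*(x-c)^2) has_real_derivative 6*(x-c)) (at x)"
       "((\<lambda>x. 2*(3*s + b*(x-c))) has_real_derivative 2*b) (at x)"
       "2*(3*s + b*(x-c)) \<noteq> 0"
    using L by (auto intro!: derivative_eq_intros)
  from DERIV_divide[OF this] show ?thesis
    by (rule DERIV_cong) (use alg[OF refl L] in simp)
qed

lemma quadratic_ratio_deriv_has_real_derivative:
  fixes s b c x :: real
  assumes L: "3*s + b*(x-c) \<noteq> 0"
  shows "((\<lambda>x. 3*(x-c)*(6*s + b*(x-c)) / (2*(3*s + b*(x-c))^2)) has_real_derivative
           27*s^2 / (3*s + b*(x-c))^3) (at x)"
proof -
  have alg: "((3*(6*s + b*u) + 3*u*b) * (2*L^2) - 3*u*(6*s + b*u) * (4*L*b)) / (2*L^2 * (2*L^2))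
             = 27*s^2 / L^3"
    if "L = 3*s + b*u" "L \<noteq> 0" for u L :: real
  proof -
    have "(3*(6*s + b*u) + 3*u*b) * (2*L^2) - 3*u*(6*s + b*u) * (4*L*b) = 108*s^2*L"
      using that(1) by (simp add: algebra_simps power2_eq_square)
    then show ?thesis
      using that(2) by (simp add: divide_simps) (simp add: eval_nat_numeral)
  qed
  have "((\<lambda>x. 3*(x-c)*(6*s + b*(x-c))) has_real_derivative 3*(6*s + b*(x-c)) + 3*(x-c)*b) (at x)"
       "((\<lambda>x. 2*(3*s + b*(x-c))^2) has_real_derivative 4*(3*s + b*(x-c))*b) (at x)"
       "2*(3*s + b*(x-c))^2 \<noteq> 0"
    using L by (auto intro!: derivative_eq_intros simp: algebra_simps)
  from DERIV_divide[OF this] show ?thesis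
    by (rule DERIV_cong) (use alg[OF refl L] in simp)
qed

lemma xlogxy_tendsto_zero:
  assumes "c > 0"
  shows "((\<lambda>x. xlogxy x c) \<longlongrightarrow> 0) (at_right 0)"
proof -
  have "((\<lambda>x::real. x * ln x - x * ln c) \<longlongrightarrow> 0) (at_right 0)"
    by real_asymp
  moreover have "eventually (\<lambda>x. x * ln x - x * ln c = xlogxy x c) (at_right 0)"
    using eventually_at_right_less[of 0]
    by eventually_elim (use assms in \<open>auto simp: xlogxy_def ln_div algebra_simps\<close>)
  ultimately show ?thesis
    using tendsto_cong by fastforce
qed

lemma continuous_on_xlogxy:
  assumes "c > 0"
  shows "continuous_on {0..} (\<lambda>x. xlogxy x c)"
proof -
  have "continuous (at x within {0..}) (\<lambda>x. xlogxy x c)" if "x \<ge> 0" for x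
  proof (cases "x = 0")
    case True
    then show ?thesis
      using xlogxy_tendsto_zero[OF assms]
      by (simp add: continuous_within at_within_Ici_at_right xlogxy_def)
  next
    case False
    with that have "x > 0" by simp
    have "eventually (\<lambda>y. y * ln (y / c) = xlogxy y c) (nhds x)"
      using eventually_nhds_in_open[of "{0<..}" x] \<open>x > 0\<close>
      by (auto elim!: eventually_mono simp: xlogxy_def)
    moreover have "isCont (\<lambda>x. x * ln (x / c)) x"
      using \<open>x > 0\<close> assms by (intro continuous_intros) auto
    ultimately have "isCont (\<lambda>x. xlogxy x c) x"
      by (simp add: isCont_cong)
    then show ?thesis
      using continuous_at_imp_continuous_at_within by blast
  qed
  then show ?thesis
    using continuous_on_eq_continuous_within by auto
qed

lemma xlogxy_has_real_derivative:
  assumes "x > 0" "c > 0"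
  shows "((\<lambda>x. xlogxy x c) has_real_derivative ln (x / c) + 1) (at x)"
proof (rule has_field_derivative_transform_within_open[where S = "{0<..}"])
  show "((\<lambda>x. x * ln (x / c)) has_real_derivative ln (x / c) + 1) (at x)"
    using assms by (auto intro!: derivative_eq_intros simp: field_simps)
qed (use assms in \<open>auto simp: xlogxy_def\<close>)

lemma xlogxy_has_real_derivative_right:
  assumes "x \<ge> 0" "c > 0"
  shows "((\<lambda>c. xlogxy x c) has_real_derivative - x / c) (at c)"
proof (cases "x = 0")
  case True
  then show ?thesis by (simp add: xlogxy_def)
next
  case False
  show ?thesis
  proof (rule has_field_derivative_transform_within_open[where S = "{0<..}"])
    show "((\<lambda>c. x * (ln x - ln c)) has_real_derivative - x / c) (at c)"
      using assms by (auto intro!: derivative_eq_intros)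
  qed (use assms False in \<open>auto simp: xlogxy_def ln_div\<close>)
qed

lemma binKL_self [simp]: "binKL q q = 0"
  by (simp add: binKL_def xlogxy_def)

lemma continuous_on_binKL_left:
  assumes "0 < q" "q < 1"
  shows "continuous_on {0..1} (\<lambda>p. binKL p q)"
proof -
  have "continuous_on {0..1} (\<lambda>p. xlogxy p q)"
    using continuous_on_xlogxy[of q] assms by (auto intro: continuous_on_subset)
  moreover have "continuous_on {0..1} (\<lambda>p. xlogxy (1 - p) (1 - q))"
    by (rule continuous_on_compose2[OF continuous_on_xlogxy[of "1 - q"]])
      (use assms in \<open>auto intro!: continuous_intros\<close>)
  ultimately show ?thesis
    unfolding binKL_def by (intro continuous_intros)
qed

lemma binKL_has_real_derivative_left:
  assumes "0 < p" "p < 1" "0 < q" "q < 1"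
  shows "((\<lambda>p. binKL p q) has_real_derivative ln (p / q) - ln ((1 - p) / (1 - q))) (at p)"
proof -
  have "((\<lambda>p. xlogxy (1 - p) (1 - q)) has_real_derivative (ln ((1 - p) / (1 - q)) + 1) * (- 1)) (at p)"
    using assms by (intro DERIV_chain2[OF xlogxy_has_real_derivative]) (auto intro!: derivative_eq_intros)
  from DERIV_add[OF xlogxy_has_real_derivative[of p q] this] show ?thesis
    using assms by (simp add: binKL_def)
qed

lemma binKL_has_real_derivative_right:
  assumes "0 \<le> p" "p \<le> 1" "0 < q" "q < 1"
  shows "((\<lambda>q. binKL p q) has_real_derivative (q - p) / (q * (1 - q))) (at q)"
proof -
  have "((\<lambda>q. xlogxy (1 - p) (1 - q)) has_real_derivative - (1 - p) / (1 - q) * (- 1)) (at q)"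
    using assms by (intro DERIV_chain2[OF xlogxy_has_real_derivative_right]) (auto intro!: derivative_eq_intros)
  from DERIV_add[OF xlogxy_has_real_derivative_right[of p q] this] show ?thesis
    using assms by (simp add: binKL_def field_simps)
qed

lemma binKL_bound_factor_pos:
  fixes p q :: real
  assumes "0 < q" "q < 1" "0 \<le> p" "p \<le> 1"
  shows "0 < 6*(q*(1-q)) + 2*(1-2*q)*(p-q)"
proof -
  have "6*(q*(1-q)) + 2*(1-2*q)*(p-q) = 2*(q*(1-q) + p*(1-q) + q*(1-p))"
    by (simp add: algebra_simps)
  moreover have "0 < q*(1-q) + p*(1-q) + q*(1-p)"
    using assms by (simp add: add_pos_nonneg)
  ultimately show ?thesis by simp
qed

lemma binKL_bound_factor_cube_estimate:
  fixes q x :: real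
  assumes q: "0 < q" "q < 1" and x: "0 < x" "x < 1"
  shows "27*(q*(1-q))^2 / (3*(q*(1-q)) + (1-2*q)*(x-q))^3 \<le> 1/x + 1/(1-x)"
proof -
  define L where "L = 3*(q*(1-q)) + (1-2*q)*(x-q)"
  have "27*(q*(1-q))*(x*(1-q))*(q*(1-x)) \<le> (q*(1-q) + x*(1-q) + q*(1-x))^3"
    using q x by (intro arith_geo_mean_three) auto
  then have "27*(q*(1-q))^2 * (x*(1-x)) \<le> L^3"
    by (simp add: L_def power2_eq_square algebra_simps)
  moreover have "L > 0"
    using binKL_bound_factor_pos[of q x] q x by (simp add: L_def algebra_simps)
  moreover have "1/x + 1/(1-x) = 1/(x*(1-x))"
    using x by (simp add: field_simps)
  ultimately show ?thesis
    unfolding L_def[symmetric] using x by (simp add: divide_simps ac_simps)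
qed

lemma binKL_lower_bound:
  assumes q: "0 < q" "q < 1" and p: "0 \<le> p" "p \<le> 1"
  shows "3*(p-q)^2 \<le> binKL p q * (6*(q*(1-q)) + 2*(1-2*q)*(p-q))"
proof -
  define s where "s = q*(1-q)"
  define L where "L x = 3*s + (1-2*q)*(x-q)" for x
  have L_pos: "L x > 0" if "0 \<le> x" "x \<le> 1" for x
    using binKL_bound_factor_pos[OF q that] by (simp add: L_def s_def algebra_simps)
  define F where "F x = binKL x q - 3*(x-q)^2 / (2*(3*s + (1-2*q)*(x-q)))" for x
  define F' where "F' x = ln (x/q) - ln ((1-x)/(1-q))
                          - 3*(x-q)*(6*s + (1-2*q)*(x-q)) / (2*(3*s + (1-2*q)*(x-q))^2)" for x
  have F_deriv: "(F has_real_derivative F' x) (at x)" if "x \<in> {0<..<1}" for x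
    unfolding F_def[abs_def] F'_def
    using that q L_pos[of x] unfolding L_def
    by (intro DERIV_diff binKL_has_real_derivative_left quadratic_ratio_has_real_derivative) auto
  have F'_deriv: "(F' has_real_derivative 1/x + 1/(1-x) - 27*s^2/(L x)^3) (at x)"
    if "x \<in> {0<..<1}" for x
  proof -
    have "((\<lambda>x. ln (x/q)) has_real_derivative 1/x) (at x)"
      using that q by (auto intro!: derivative_eq_intros simp: field_simps)
    moreover have "((\<lambda>x. ln ((1-x)/(1-q))) has_real_derivative -1/(1-x)) (at x)"
      using that q by (auto intro!: derivative_eq_intros simp: divide_simps)
    ultimately have "((\<lambda>x. ln (x/q) - ln ((1-x)/(1-q))) has_real_derivative 1/x + 1/(1-x)) (at x)"
      using DERIV_diff by fastforce
    then show ?thesis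
      unfolding F'_def[abs_def] L_def
      using that L_pos[of x] unfolding L_def
      by (intro DERIV_diff quadratic_ratio_deriv_has_real_derivative) auto
  qed
  have F''_nonneg: "27*s^2/(L x)^3 \<le> 1/x + 1/(1-x)" if "x \<in> {0<..<1}" for x
    using binKL_bound_factor_cube_estimate[OF q, of x] that by (simp add: L_def s_def)
  have "mono_on {0<..<1} F'"
    using F'_deriv F''_nonneg by (intro deriv_nonneg_imp_mono_on) auto
  moreover have "continuous_on {0..1} F"
  proof -
    have "\<forall>x\<in>{0..1}. 2*(3*s + (1-2*q)*(x-q)) \<noteq> 0"
      using L_pos unfolding L_def by fastforce
    then show ?thesis
      unfolding F_def[abs_def] using continuous_on_binKL_left[OF q]
      by (intro continuous_intros) auto
  qed
  ultimately have "F q \<le> F p"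
    using F_deriv q p by (intro deriv_mono_imp_min[where f' = F']) (auto simp: F'_def)
  moreover have "F q = 0"
    by (simp add: F_def)
  moreover have "6*(q*(1-q)) + 2*(1-2*q)*(p-q) = 2 * L p"
    by (simp add: L_def s_def)
  ultimately show ?thesis
    using L_pos[OF p] by (simp add: F_def L_def divide_simps)
qed

lemma binKL_pos:
  assumes q: "0 < q" "q < 1" and p: "0 \<le> p" "p \<le> 1" "p \<noteq> q"
  shows "binKL p q > 0"
proof -
  have "0 < binKL p q * (6*(q*(1-q)) + 2*(1-2*q)*(p-q))"
    using binKL_lower_bound[OF q p(1,2)] p(3) by (smt (verit) zero_less_power2)
  with binKL_bound_factor_pos[OF q p(1,2)] show ?thesis
    by (simp add: zero_less_mult_iff)
qed

lemma qfun_pos: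
  assumes "0 \<le> z1" "z1 < z" "z < z2" "z2 \<le> 1"
  shows "qfun z1 z2 z > 0"
  using assms binKL_pos[of z z1] binKL_pos[of z z2] by (simp add: qfun_def)

lemma qfun_has_real_derivative:
  assumes "0 \<le> z1" "z1 < z" "z < z2" "z2 \<le> 1"
  shows "(qfun z1 z2 has_real_derivative qfun z1 z2 z *
           (2/(z-z1) + 2/(z2-z) - (z2-z)/(z*(1-z)*binKL z2 z) - (z-z1)/(z*(1-z)*binKL z1 z))) (at z)"
proof -
  define D1 D2 where "D1 = binKL z1 z" and "D2 = binKL z2 z"
  have z: "0 < z" "z < 1" using assms by auto
  have D: "D1 > 0" "D2 > 0"
    unfolding D1_def D2_def using assms by (auto intro!: binKL_pos)
  define A B where "A z = binKL z2 z * (z-z1)^2" and "B z = binKL z1 z * (z-z2)^2" for z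
  define A' B' where "A' = (z-z2)/(z*(1-z)) * (z-z1)^2 + D2 * (2*(z-z1))"
    and "B' = (z-z1)/(z*(1-z)) * (z-z2)^2 + D1 * (2*(z-z2))"
  have dA: "(A has_real_derivative A') (at z)"
    unfolding A_def[abs_def] A'_def D2_def using assms z
    by (auto intro!: derivative_eq_intros binKL_has_real_derivative_right)
  have dB: "(B has_real_derivative B') (at z)"
    unfolding B_def[abs_def] B'_def D1_def using assms z
    by (auto intro!: derivative_eq_intros binKL_has_real_derivative_right)
  have ne: "z - z1 \<noteq> 0" "z - z2 \<noteq> 0" "D1 \<noteq> 0" "D2 \<noteq> 0"
    using D assms by auto
  have quotient: "(x * u^2 + D * (2*u)) / (D * u^2) = 2/u + x/D"
    if "u \<noteq> 0" "D \<noteq> 0" for x u D :: real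
    using that by (simp add: field_simps power2_eq_square)
  have "A' / A z = 2/(z-z1) + (z-z2)/(z*(1-z))/D2"
    unfolding A_def A'_def D2_def[symmetric] by (rule quotient) (use ne in auto)
  moreover have "B' / B z = 2/(z-z2) + (z-z1)/(z*(1-z))/D1"
    unfolding B_def B'_def D1_def[symmetric] by (rule quotient) (use ne in auto)
  moreover have "2/(z-z2) = - (2/(z2-z))"
    by (simp add: minus_divide_right)
  moreover have "(z-z2)/(z*(1-z))/D2 = - ((z2-z)/(z*(1-z)*D2))"
    by (simp add: minus_divide_left)
  ultimately have factor: "A' / A z - B' / B z
      = 2/(z-z1) + 2/(z2-z) - (z2-z)/(z*(1-z)*D2) - (z-z1)/(z*(1-z)*D1)"
    by simp
  have nonzero: "A z \<noteq> 0" "B z \<noteq> 0"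
    using ne by (simp_all add: A_def B_def D1_def D2_def)
  have "(a' * b - a * b') / (b * b) = a / b * (a' / a - b' / b)"
    if "a \<noteq> 0" "b \<noteq> 0" for a a' b b' :: real
    using that by (simp add: field_simps)
  from DERIV_divide[OF dA dB nonzero(2)] this[OF nonzero]
  have "((\<lambda>z. A z / B z) has_real_derivative A z / B z * (A' / A z - B' / B z)) (at z)"
    by (rule DERIV_cong)
  moreover have "qfun z1 z2 = (\<lambda>z. A z / B z)"
    by (simp add: fun_eq_iff qfun_def A_def B_def power2_commute)
  ultimately show ?thesis
    unfolding factor D1_def D2_def by simp
qed

lemma qfun_deriv_factor_nonneg:
  assumes "0 \<le> z1" "z1 < z" "z < z2" "z2 \<le> 1"
  shows "(z2-z)/(z*(1-z)*binKL z2 z) + (z-z1)/(z*(1-z)*binKL z1 z) \<le> 2/(z-z1) + 2/(z2-z)"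
proof -
  define a b s c where "a = z2 - z" and "b = z - z1" and "s = z*(1-z)" and "c = 1 - 2*z"
  have pos: "a > 0" "b > 0" "s > 0" "binKL z1 z > 0" "binKL z2 z > 0"
    using assms by (auto simp: a_def b_def s_def intro!: binKL_pos)
  have "3*a^2 \<le> binKL z2 z * (6*s + 2*c*a)"
    using binKL_lower_bound[of z z2] assms by (simp add: a_def s_def c_def)
  then have "a/(s*binKL z2 z) \<le> 2/a + 2*c/(3*s)"
    using pos by (simp add: field_simps power2_eq_square)
  moreover have "3*b^2 \<le> binKL z1 z * (6*s - 2*c*b)"
  proof -
    have "6*s - 2*c*b = 6*(z*(1-z)) + 2*(1-2*z)*(z1-z)" and "b^2 = (z1-z)^2"
      by (simp_all add: b_def s_def c_def algebra_simps power2_commute)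
    then show ?thesis
      using binKL_lower_bound[of z z1] assms by simp
  qed
  then have "b/(s*binKL z1 z) \<le> 2/b - 2*c/(3*s)"
    using pos by (simp add: field_simps power2_eq_square)
  ultimately show ?thesis
    by (simp add: a_def b_def s_def)
qed

theorem lemma16:
  fixes z1 z2 :: real
  assumes "0 \<le> z1" and "z1 < z2" and "z2 \<le> 1"
  shows "mono_on {z1<..<z2} (qfun z1 z2)"
proof (rule deriv_nonneg_imp_mono_on)
  fix z assume "z \<in> {z1<..<z2}"
  with assms have z: "0 \<le> z1" "z1 < z" "z < z2" "z2 \<le> 1" by auto
  show "(qfun z1 z2 has_real_derivative qfun z1 z2 z *
           (2/(z-z1) + 2/(z2-z) - (z2-z)/(z*(1-z)*binKL z2 z) - (z-z1)/(z*(1-z)*binKL z1 z))) (at z)"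
    using qfun_has_real_derivative[OF z] .
  show "0 \<le> qfun z1 z2 z *
           (2/(z-z1) + 2/(z2-z) - (z2-z)/(z*(1-z)*binKL z2 z) - (z-z1)/(z*(1-z)*binKL z1 z))"
    using qfun_pos[OF z] qfun_deriv_factor_nonneg[OF z] by simp
qed

end
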